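(* For every integer $k\ge 3$, $src^*(C_{(k-1)^2}(\{1,k\}))=rc^*(C_{(k-1)^2}(\{1,k\}))=2k-4$.
   Context: For $n\ge 2$ and $S\subseteq\{1,\dots,n-1\}$, the circulant digraph $C_n(S)$ has vertex set $\{v_0,\dots,v_{n-1}\}$ and arcs $v_iv_j$ for all $i,j$ with $j-i\equiv s \pmod n$ for some $s\in S$. For a strongly connected digraph $D$ and an arc-colouring $\Gamma:A(D)\to\{1,\dots,k\}$, a directed path is rainbow if its arcs have pairwise distinct colours. $\Gamma$ is rainbow connected if for every ordered pair of distinct vertices $x,y$ there is a rainbow directed $xy$-path; $rc^*(D)$ is the minimum number of colours of such a colouring. $\Gamma$ is strongly rainbow connected if for every ordered pair of distinct vertices $x,y$ there is a rainbow directed $xy$-path of length $d_D(x,y)$; $src^*(D)$ is the minimum such number. *)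

theory Defs
  imports Main
begin

text \<open>A digraph is given by a vertex set V and an arc predicate A.
  Arc colourings are functions on ordered pairs of vertices; only their values on arcs matter.\<close>

definition circulant_arc :: "nat \<Rightarrow> nat set \<Rightarrow> nat \<Rightarrow> nat \<Rightarrow> bool" where
  "circulant_arc n S i j \<longleftrightarrow> i < n \<and> j < n \<and> (\<exists>s\<in>S. j = (i + s) mod n)"

definition circulant_vertices :: "nat \<Rightarrow> nat set" where
  "circulant_vertices n = {..<n}"

definition dipath :: "'a set \<Rightarrow> ('a \<Rightarrow> 'a \<Rightarrow> bool) \<Rightarrow> 'a list \<Rightarrow> 'a \<Rightarrow> 'a \<Rightarrow> bool" where
  "dipath V A p x y \<longleftrightarrow> p \<noteq> [] \<and> hd p = x \<and> last p = y \<and> distinct p \<and> set p \<subseteq> V \<and>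
     (\<forall>i. i + 1 < length p \<longrightarrow> A (p ! i) (p ! (i + 1)))"

definition path_len :: "'a list \<Rightarrow> nat" where
  "path_len p = length p - 1"

definition rainbow :: "('a \<times> 'a \<Rightarrow> nat) \<Rightarrow> 'a list \<Rightarrow> bool" where
  "rainbow c p \<longleftrightarrow> distinct (map (\<lambda>i. c (p ! i, p ! (i + 1))) [0..<length p - 1])"

definition digraph_dist :: "'a set \<Rightarrow> ('a \<Rightarrow> 'a \<Rightarrow> bool) \<Rightarrow> 'a \<Rightarrow> 'a \<Rightarrow> nat" where
  "digraph_dist V A x y = (LEAST l. \<exists>p. dipath V A p x y \<and> path_len p = l)"

definition arc_colouring :: "'a set \<Rightarrow> ('a \<Rightarrow> 'a \<Rightarrow> bool) \<Rightarrow> ('a \<times> 'a \<Rightarrow> nat) \<Rightarrow> nat \<Rightarrow> bool" where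
  "arc_colouring V A c k \<longleftrightarrow> (\<forall>a\<in>V. \<forall>b\<in>V. A a b \<longrightarrow> c (a, b) \<in> {1..k})"

definition rainbow_connected :: "'a set \<Rightarrow> ('a \<Rightarrow> 'a \<Rightarrow> bool) \<Rightarrow> ('a \<times> 'a \<Rightarrow> nat) \<Rightarrow> bool" where
  "rainbow_connected V A c \<longleftrightarrow>
     (\<forall>x\<in>V. \<forall>y\<in>V. x \<noteq> y \<longrightarrow> (\<exists>p. dipath V A p x y \<and> rainbow c p))"

definition strongly_rainbow_connected :: "'a set \<Rightarrow> ('a \<Rightarrow> 'a \<Rightarrow> bool) \<Rightarrow> ('a \<times> 'a \<Rightarrow> nat) \<Rightarrow> bool" where
  "strongly_rainbow_connected V A c \<longleftrightarrow>
     (\<forall>x\<in>V. \<forall>y\<in>V. x \<noteq> y \<longrightarrow>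
        (\<exists>p. dipath V A p x y \<and> rainbow c p \<and> path_len p = digraph_dist V A x y))"

definition rc_star :: "'a set \<Rightarrow> ('a \<Rightarrow> 'a \<Rightarrow> bool) \<Rightarrow> nat" where
  "rc_star V A = (LEAST k. \<exists>c. arc_colouring V A c k \<and> rainbow_connected V A c)"

definition src_star :: "'a set \<Rightarrow> ('a \<Rightarrow> 'a \<Rightarrow> bool) \<Rightarrow> nat" where
  "src_star V A = (LEAST k. \<exists>c. arc_colouring V A c k \<and> strongly_rainbow_connected V A c)"

end

theory Submission
  imports Defs "HOL-Number_Theory.Cong"
begin

text \<open>Put m = k - 1, so the digraph is C_{m^2}(\{1, m + 1\}), and view vertex v as the cell
  (v div m, v mod m) of an m \<times> m grid: a short arc moves one column to the right, a long arc one
  column to the right and one row down, both wrapping around. A walk with a short and b long steps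
  advances by a + b(m + 1), so writing an offset as d = q m + r with digits q, r < m, the shortest
  walk has length r if q \<le> r and r + m otherwise; for d = m^2 - 2 this is 2m - 2, which bounds the
  number of colours of any rainbow connected colouring from below.
  Conversely, colour a short arc leaving an interior column (neither 0 nor m - 1) by its column,
  m + v mod m, and every other arc by its row, v div m + 1. These 2m - 2 colours make suitable
  shortest walks rainbow: the interior columns visited by short steps are distinct, and the rows
  met by row-coloured steps increase by less than m along the walk, provided the long steps are
  placed well relative to the column border.\<close>

lemma distinct_map_upt_nat:
  assumes "\<And>i j. i < j \<Longrightarrow> j < n \<Longrightarrow> f i \<noteq> f j"
  shows "distinct (map f [0..<n])"
  unfolding distinct_map using assms by (auto intro: linorder_inj_onI')

lemma mod_add_neq_close:
  fixes y i j n :: nat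
  assumes "i < j" and "j < i + n"
  shows "(y + i) mod n \<noteq> (y + j) mod n"
proof
  assume "(y + i) mod n = (y + j) mod n"
  then have "n dvd j - i"
    using cong_add_lcancel_nat[of y i j n] mod_eq_dvd_iff_nat[of i j n] assms(1)
    by (simp add: cong_def)
  moreover have "0 < j - i" "j - i < n" using assms by auto
  ultimately show False using nat_dvd_not_less by blast
qed

lemma div_mod_below_double:
  fixes y m :: nat
  assumes "y < 2 * m"
  shows "y div m = (if y < m then 0 else 1) \<and> y mod m = (if y < m then y else y - m)"
proof (cases "y < m")
  case False
  then have m: "m > 0" "m \<le> y" using assms by auto
  have "y div m = Suc ((y - m) div m)" by (rule le_div_geq[OF m])
  moreover have "y mod m = (y - m) mod m" by (rule le_mod_geq[OF m(2)])
  moreover have "y - m < m" using assms by simp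
  ultimately show ?thesis using False by simp
qed simp

lemma div_mod_below_triple:
  fixes y m :: nat
  assumes "2 * m \<le> y" and "y < 3 * m"
  shows "y div m = 2 \<and> y mod m = y - 2 * m"
proof -
  have m: "m > 0" "m \<le> y" using assms by auto
  have "y div m = Suc ((y - m) div m)" by (rule le_div_geq[OF m])
  moreover have "y mod m = (y - m) mod m" by (rule le_mod_geq[OF m(2)])
  moreover have "(y - m) div m = 1 \<and> (y - m) mod m = y - m - m"
    using div_mod_below_double[of "y - m" m] assms by auto
  ultimately show ?thesis by simp
qed

lemma digraph_dist_le_path_len:
  assumes "dipath V A p x y"
  shows "digraph_dist V A x y \<le> path_len p"
  unfolding digraph_dist_def using assms by (auto intro: Least_le)

lemma digraph_dist_eqI:
  assumes "dipath V A p x y" and "path_len p = L"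
    and "\<And>q. dipath V A q x y \<Longrightarrow> L \<le> path_len q"
  shows "digraph_dist V A x y = L"
  unfolding digraph_dist_def by (rule Least_equality) (use assms in auto)

lemma rainbow_path_len_le:
  assumes c: "arc_colouring V A c K" and p: "dipath V A p x y" and rb: "rainbow c p"
  shows "path_len p \<le> K"
proof -
  define colours where "colours = map (\<lambda>i. c (p ! i, p ! (i + 1))) [0..<length p - 1]"
  have "set colours \<subseteq> {1..K}"
  proof
    fix z assume "z \<in> set colours"
    then obtain i where i: "i + 1 < length p" and z: "z = c (p ! i, p ! (i + 1))"
      unfolding colours_def by (auto simp: less_diff_conv)
    have "A (p ! i) (p ! (i + 1))" "p ! i \<in> V" "p ! (i + 1) \<in> V"
      using p i nth_mem[of i p] nth_mem[of "i + 1" p] unfolding dipath_def by auto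
    then show "z \<in> {1..K}" using c z unfolding arc_colouring_def by blast
  qed
  then have "card (set colours) \<le> K" using card_mono[of "{1..K}" "set colours"] by simp
  moreover have "card (set colours) = path_len p"
    using rb distinct_card[of colours] unfolding rainbow_def colours_def path_len_def by simp
  ultimately show ?thesis by simp
qed

lemma rainbow_connected_dist_le:
  assumes "arc_colouring V A c K" and "rainbow_connected V A c"
    and "x \<in> V" and "y \<in> V" and "x \<noteq> y"
  shows "digraph_dist V A x y \<le> K"
proof -
  obtain p where p: "dipath V A p x y" and "rainbow c p"
    using assms(2-) unfolding rainbow_connected_def by blast
  then have "path_len p \<le> K" by (rule rainbow_path_len_le[OF assms(1)])
  with digraph_dist_le_path_len[OF p] show ?thesis by linarith
qed

lemma strongly_rainbow_connected_imp_rainbow_connected: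
  "strongly_rainbow_connected V A c \<Longrightarrow> rainbow_connected V A c"
  unfolding strongly_rainbow_connected_def rainbow_connected_def by blast

lemma src_star_rc_star_eqI:
  assumes "arc_colouring V A c K" and "strongly_rainbow_connected V A c"
    and "\<And>c' K'. arc_colouring V A c' K' \<Longrightarrow> rainbow_connected V A c' \<Longrightarrow> K \<le> K'"
  shows "src_star V A = K \<and> rc_star V A = K"
  unfolding src_star_def rc_star_def
  using assms strongly_rainbow_connected_imp_rainbow_connected
  by (intro conjI Least_equality) blast+


section \<open>Distances in C_{m^2}(\{1, m + 1\})\<close>

abbreviation sq_circulant_vertices :: "nat \<Rightarrow> nat set" where
  "sq_circulant_vertices m \<equiv> circulant_vertices (m * m)"

abbreviation sq_circulant_arc :: "nat \<Rightarrow> nat \<Rightarrow> nat \<Rightarrow> bool" where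
  "sq_circulant_arc m \<equiv> circulant_arc (m * m) {1, m + 1}"

text \<open>For d < m^2 with digits q = d div m and r = d mod m, the shortest walks advancing by d
  take q long and r - q short steps if q \<le> r, and q - 1 long and r + m - q + 1 short steps
  otherwise.\<close>

definition step_dist :: "nat \<Rightarrow> nat \<Rightarrow> nat" where
  "step_dist m d = (if d div m \<le> d mod m then d mod m else d mod m + m)"

lemma step_dist_le:
  fixes m L b d :: nat
  assumes m: "m \<ge> 2" and "b \<le> L" and offset: "(L + b * m) mod (m * m) = d"
  shows "step_dist m d \<le> L"
proof -
  have "d mod m = (L + b * m) mod (m * m) mod m" using offset by simp
  also have "\<dots> = L mod m" by (simp add: mod_mod_cancel)
  finally have d_mod: "d mod m = L mod m" .
  show ?thesis
  proof (cases "L < m")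
    case True
    then have "b < m" using \<open>b \<le> L\<close> by simp
    then have "L + b * m < m * m"
      using True mult_le_mono1[of "b + 1" m m] by simp
    then have "d = L + b * m" using offset by simp
    then show ?thesis unfolding step_dist_def using True \<open>b \<le> L\<close> by simp
  next
    case False
    have "L = L div m * m + L mod m" by simp
    moreover have "L div m \<ge> 1" using False m by (simp add: Suc_le_eq div_greater_zero_iff)
    ultimately have "L \<ge> m + L mod m" by (metis add_le_mono1 mult_1 mult_le_mono1)
    then show ?thesis unfolding step_dist_def using d_mod by auto
  qed
qed

lemma dipath_offset:
  assumes dp: "dipath (sq_circulant_vertices m) (sq_circulant_arc m) p x y"
  shows "\<exists>a b. a + b = path_len p \<and> y = (x + a + b * (m + 1)) mod (m * m)"
proof -
  have ne: "p \<noteq> []" and hd: "hd p = x" and last: "last p = y" and vertices: "set p \<subseteq> {..<m * m}"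
    using dp unfolding dipath_def circulant_vertices_def by auto
  have x: "x < m * m" using ne hd vertices by (metis hd_in_set lessThan_iff subsetD)
  have p0: "p ! 0 = x" using ne hd by (simp add: hd_conv_nth)
  have y: "y = p ! (length p - 1)" using ne last by (simp add: last_conv_nth)
  have "\<exists>a b. a + b = i \<and> p ! i = (x + a + b * (m + 1)) mod (m * m)" if "i < length p" for i
    using that
  proof (induction i)
    case 0
    then show ?case using p0 x by auto
  next
    case (Suc i)
    then obtain a b where ab: "a + b = i" "p ! i = (x + a + b * (m + 1)) mod (m * m)" by auto
    have "sq_circulant_arc m (p ! i) (p ! (i + 1))"
      using dp Suc.prems unfolding dipath_def by simp
    then consider "p ! Suc i = (p ! i + 1) mod (m * m)" | "p ! Suc i = (p ! i + (m + 1)) mod (m * m)"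
      unfolding circulant_arc_def by auto
    then show ?case
    proof cases
      case 1
      also have "(p ! i + 1) mod (m * m) = (x + a + b * (m + 1) + 1) mod (m * m)"
        unfolding ab(2) by (rule mod_add_left_eq)
      finally have "p ! Suc i = (x + (a + 1) + b * (m + 1)) mod (m * m)" by simp
      then show ?thesis using ab(1) by (intro exI[of _ "a + 1"] exI[of _ b]) simp
    next
      case 2
      also have "(p ! i + (m + 1)) mod (m * m) = (x + a + b * (m + 1) + (m + 1)) mod (m * m)"
        unfolding ab(2) by (rule mod_add_left_eq)
      finally have "p ! Suc i = (x + a + (b + 1) * (m + 1)) mod (m * m)" by (simp add: algebra_simps)
      then show ?thesis using ab(1) by (intro exI[of _ a] exI[of _ "b + 1"]) simp
    qed
  qed
  from this[of "length p - 1"] show ?thesis using ne unfolding path_len_def y by simp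
qed

lemma step_dist_le_path_len:
  assumes m: "m \<ge> 2" and d: "d < m * m"
    and dp: "dipath (sq_circulant_vertices m) (sq_circulant_arc m) p x ((x + d) mod (m * m))"
  shows "step_dist m d \<le> path_len p"
proof -
  obtain a b where len: "a + b = path_len p"
    and target: "(x + d) mod (m * m) = (x + a + b * (m + 1)) mod (m * m)"
    using dipath_offset[OF dp] by blast
  have "(x + (a + b + b * m)) mod (m * m) = (x + d) mod (m * m)"
    using target by (simp add: algebra_simps)
  then have "(a + b + b * m) mod (m * m) = d mod (m * m)"
    using cong_add_lcancel_nat[of x "a + b + b * m" d "m * m", unfolded cong_def] by blast
  then have "(a + b + b * m) mod (m * m) = d" using d by simp
  then show ?thesis using step_dist_le[OF m, of b "a + b"] len by simp
qed


section \<open>Walks described by words of short and long steps\<close>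

text \<open>Letter j of a word w says whether step j of the walk is long (True) or short.\<close>

definition long_steps :: "bool list \<Rightarrow> nat \<Rightarrow> nat" where
  "long_steps w j = length (filter id (take j w))"

definition walk_offset :: "nat \<Rightarrow> bool list \<Rightarrow> nat \<Rightarrow> nat" where
  "walk_offset m w j = j + m * long_steps w j"

definition walk_vertex :: "nat \<Rightarrow> nat \<Rightarrow> bool list \<Rightarrow> nat \<Rightarrow> nat" where
  "walk_vertex m x w j = (x + walk_offset m w j) mod (m * m)"

definition walk :: "nat \<Rightarrow> nat \<Rightarrow> bool list \<Rightarrow> nat list" where
  "walk m x w = map (walk_vertex m x w) [0..<Suc (length w)]"

lemma long_steps_Suc:
  "j < length w \<Longrightarrow> long_steps w (Suc j) = long_steps w j + (if w ! j then 1 else 0)"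
  by (simp add: long_steps_def take_Suc_conv_app_nth)

lemma long_steps_mono: "i \<le> j \<Longrightarrow> long_steps w i \<le> long_steps w j"
  unfolding long_steps_def
  by (metis le_add_diff_inverse take_add filter_append length_append le_add1)

lemma long_steps_append: "long_steps (u @ v) j = long_steps u j + long_steps v (j - length u)"
  unfolding long_steps_def by simp

lemma long_steps_replicate: "long_steps (replicate n b) j = (if b then min j n else 0)"
  unfolding long_steps_def by simp

lemma walk_offset_strict_mono: "i < j \<Longrightarrow> walk_offset m w i < walk_offset m w j"
  unfolding walk_offset_def using long_steps_mono[of i j w]
  by (simp add: add_less_le_mono)

lemma walk_offset_Suc:
  "j < length w \<Longrightarrow> walk_offset m w (Suc j) = walk_offset m w j + (if w ! j then m + 1 else 1)"
  by (simp add: walk_offset_def long_steps_Suc)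

lemma walk_vertex_Suc:
  "j < length w \<Longrightarrow>
     walk_vertex m x w (Suc j) = (walk_vertex m x w j + (if w ! j then m + 1 else 1)) mod (m * m)"
  unfolding walk_vertex_def by (simp add: walk_offset_Suc mod_add_left_eq add.assoc)

lemma walk_nth: "j \<le> length w \<Longrightarrow> walk m x w ! j = walk_vertex m x w j"
  unfolding walk_def by (simp del: upt_Suc)

lemma length_walk: "length (walk m x w) = Suc (length w)"
  unfolding walk_def by simp

lemma distinct_walk:
  assumes "walk_offset m w (length w) < m * m"
  shows "distinct (walk m x w)"
  unfolding walk_def
proof (rule distinct_map_upt_nat)
  fix i j assume "i < j" "j < Suc (length w)"
  have "walk_offset m w j \<le> walk_offset m w (length w)"
    using walk_offset_strict_mono[of j "length w" m w] \<open>j < Suc (length w)\<close>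
    by (cases "j = length w") auto
  then have "walk_offset m w j < walk_offset m w i + m * m" using assms by linarith
  then show "walk_vertex m x w i \<noteq> walk_vertex m x w j"
    unfolding walk_vertex_def by (rule mod_add_neq_close[OF walk_offset_strict_mono[OF \<open>i < j\<close>]])
qed

lemma dipath_walk:
  assumes m: "m \<ge> 2" and x: "x < m * m" and dist: "distinct (walk m x w)"
  shows "dipath (sq_circulant_vertices m) (sq_circulant_arc m) (walk m x w) x
           (walk_vertex m x w (length w))"
proof -
  have n: "0 < m * m" using m by simp
  have "walk m x w \<noteq> []" using length_walk[of m x w] by auto
  moreover have "hd (walk m x w) = x"
    unfolding walk_def walk_vertex_def walk_offset_def long_steps_def
    using x by (simp del: upt_Suc add: hd_map)
  moreover have "last (walk m x w) = walk_vertex m x w (length w)"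
    unfolding walk_def by (simp del: upt_Suc add: last_map)
  moreover have "set (walk m x w) \<subseteq> sq_circulant_vertices m"
    unfolding walk_def walk_vertex_def circulant_vertices_def using n by auto
  moreover have "sq_circulant_arc m (walk m x w ! i) (walk m x w ! (i + 1))"
    if "i + 1 < length (walk m x w)" for i
  proof -
    have i: "i < length w" using that by (simp add: length_walk)
    then have "walk m x w ! (i + 1) = (walk m x w ! i + (if w ! i then m + 1 else 1)) mod (m * m)"
      using walk_vertex_Suc[OF i] by (simp add: walk_nth)
    then show ?thesis
      unfolding circulant_arc_def using i n by (auto simp: walk_nth walk_vertex_def)
  qed
  ultimately show ?thesis unfolding dipath_def using dist by blast
qed


section \<open>The colouring\<close>

definition colour :: "nat \<Rightarrow> nat \<times> nat \<Rightarrow> nat" where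
  "colour m e = (if snd e = (fst e + 1) mod (m * m) \<and> fst e mod m \<noteq> 0 \<and> fst e mod m \<noteq> m - 1
                 then m + fst e mod m else fst e div m + 1)"

lemma arc_colouring_colour:
  assumes m: "m \<ge> 2"
  shows "arc_colouring (sq_circulant_vertices m) (sq_circulant_arc m) (colour m) (2 * m - 2)"
  unfolding arc_colouring_def
proof (intro ballI impI)
  fix u v assume "u \<in> sq_circulant_vertices m"
  then have "u div m < m" "u mod m < m"
    using m by (auto simp: circulant_vertices_def div_less_iff_less_mult)
  moreover have "u mod m \<noteq> m - 1 \<Longrightarrow> m + u mod m \<le> 2 * m - 2"
    using \<open>u mod m < m\<close> by linarith
  ultimately show "colour m (u, v) \<in> {1..2 * m - 2}"
    unfolding colour_def using m by auto
qed

text \<open>Step j of the walk from x along w leaves column (x + j) mod m of row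
  (x + j) div m + long_steps w j, the row being counted without wrapping modulo m.\<close>

definition row_coloured :: "nat \<Rightarrow> nat \<Rightarrow> bool list \<Rightarrow> nat \<Rightarrow> bool" where
  "row_coloured m x w j \<longleftrightarrow> w ! j \<or> (x + j) mod m = 0 \<or> (x + j) mod m = m - 1"

definition row_index :: "nat \<Rightarrow> nat \<Rightarrow> bool list \<Rightarrow> nat \<Rightarrow> nat" where
  "row_index m x w j = (x + j) div m + long_steps w j"

lemma row_coloured_mod: "row_coloured m (x mod m) w j = row_coloured m x w j"
  unfolding row_coloured_def by (simp add: mod_add_left_eq)

lemma row_index_mod: "m > 0 \<Longrightarrow> row_index m x w j = x div m + row_index m (x mod m) w j"
  unfolding row_index_def
  by (metis add.assoc add.commute div_mult_mod_eq div_mult_self1 less_not_refl2)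

lemma colour_walk_step:
  assumes m: "m \<ge> 2" and j: "j < length w"
  shows "colour m (walk_vertex m x w j, walk_vertex m x w (Suc j)) =
           (if row_coloured m x w j then row_index m x w j mod m + 1 else m + (x + j) mod m)"
proof -
  let ?v = "walk_vertex m x w j"
  have vmod: "?v mod m = (x + j) mod m"
    unfolding walk_vertex_def walk_offset_def
    by (metis mod_mod_cancel dvd_triv_left mod_mult_self2 add.assoc mult.commute)
  have vdiv: "?v div m = row_index m x w j mod m"
  proof -
    let ?y = "x + j + m * long_steps w j"
    have "?y mod (m * m) = m * (?y div m mod m) + ?y mod m" by (rule mod_mult2_eq)
    then have "?y mod (m * m) div m = ?y div m mod m" using m by simp
    moreover have "?y div m = (x + j) div m + long_steps w j" using m by simp
    ultimately show ?thesis
      unfolding walk_vertex_def walk_offset_def row_index_def by (simp add: add.assoc)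
  qed
  show ?thesis
  proof (cases "w ! j")
    case True
    then have "walk_vertex m x w (Suc j) = (?v + (m + 1)) mod (m * m)"
      using walk_vertex_Suc[OF j] by simp
    moreover have "(?v + (m + 1)) mod (m * m) \<noteq> (?v + 1) mod (m * m)"
      using mod_add_neq_close[of 1 "m + 1" "m * m" ?v] m by (simp only: add.commute) simp
    ultimately have "colour m (?v, walk_vertex m x w (Suc j)) = ?v div m + 1"
      unfolding colour_def by (simp only: fst_conv snd_conv if_False simp_thms)
    then show ?thesis using True vdiv unfolding row_coloured_def by simp
  next
    case False
    then have "walk_vertex m x w (Suc j) = (?v + 1) mod (m * m)"
      using walk_vertex_Suc[OF j] by simp
    then have "colour m (?v, walk_vertex m x w (Suc j)) =
        (if ?v mod m \<noteq> 0 \<and> ?v mod m \<noteq> m - 1 then m + ?v mod m else ?v div m + 1)"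
      unfolding colour_def by (simp only: fst_conv snd_conv simp_thms)
    then show ?thesis using False vmod vdiv unfolding row_coloured_def by auto
  qed
qed

lemma colour_walk_nth:
  assumes m: "m \<ge> 2" and s: "x mod m = s" and i: "i < length w"
  shows "colour m (walk m x w ! i, walk m x w ! (i + 1)) =
           (if row_coloured m s w i then (x div m + row_index m s w i) mod m + 1
            else m + (s + i) mod m)"
proof -
  have "row_coloured m x w i = row_coloured m s w i"
    using row_coloured_mod[of m x w i] s by simp
  moreover have "row_index m x w i = x div m + row_index m s w i"
    using row_index_mod[of m x w i] s m by simp
  moreover have "(x + i) mod m = (s + i) mod m" using s by (metis mod_add_left_eq)
  ultimately show ?thesis using colour_walk_step[OF m i, of x] i by (simp add: walk_nth)
qed

lemma rainbow_walkI:
  assumes m: "m \<ge> 2" and s: "x mod m = s"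
    and rows: "\<And>i j. i < j \<Longrightarrow> j < length w \<Longrightarrow>
                 row_coloured m s w i \<Longrightarrow> row_coloured m s w j \<Longrightarrow>
                 row_index m s w i < row_index m s w j \<and> row_index m s w j < row_index m s w i + m"
    and columns: "\<And>i j. i < j \<Longrightarrow> j < length w \<Longrightarrow>
                 \<not> row_coloured m s w i \<Longrightarrow> \<not> row_coloured m s w j \<Longrightarrow>
                 (s + i) mod m \<noteq> (s + j) mod m"
  shows "rainbow (colour m) (walk m x w)"
proof -
  define f where "f i = colour m (walk m x w ! i, walk m x w ! (i + 1))" for i
  have f: "f i = (if row_coloured m s w i then (x div m + row_index m s w i) mod m + 1
                  else m + (s + i) mod m)" if "i < length w" for i
    unfolding f_def by (rule colour_walk_nth[OF m s that])
  have row_colour: "f i \<le> m" if "i < length w" "row_coloured m s w i" for i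
    using f[OF that(1)] that(2) m by (simp add: Suc_le_eq)
  have column_colour: "f i > m" if "i < length w" "\<not> row_coloured m s w i" for i
    using f[OF that(1)] that(2) unfolding row_coloured_def by simp
  have "f i \<noteq> f j" if ij: "i < j" "j < length w" for i j
  proof -
    have i: "i < length w" using ij by simp
    consider "row_coloured m s w i" "row_coloured m s w j"
      | "\<not> row_coloured m s w i" "\<not> row_coloured m s w j"
      | "row_coloured m s w i \<noteq> row_coloured m s w j" by blast
    then show ?thesis
    proof cases
      case 1
      then have "(x div m + row_index m s w i) mod m \<noteq> (x div m + row_index m s w j) mod m"
        using rows[OF ij] by (intro mod_add_neq_close) auto
      then show ?thesis using f[OF i] f[OF ij(2)] 1 by simp
    next
      case 2
      then show ?thesis using f[OF i] f[OF ij(2)] columns[OF ij] by simp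
    next
      case 3
      then show ?thesis
        using row_colour[OF i] row_colour[OF ij(2)] column_colour[OF i] column_colour[OF ij(2)]
        by (cases "row_coloured m s w i") auto
    qed
  qed
  then have "distinct (map f [0..<length w])"
    by (rule distinct_map_upt_nat)
  then show ?thesis unfolding rainbow_def f_def by (simp add: length_walk)
qed


section \<open>Three families of rainbow shortest walks\<close>

definition long_first :: "nat \<Rightarrow> nat \<Rightarrow> bool list" where
  "long_first b a = replicate b True @ replicate a False"

lemma length_long_first: "length (long_first b a) = a + b"
  by (simp add: long_first_def)

lemma long_steps_long_first: "long_steps (long_first b a) j = min j b"
  by (simp add: long_first_def long_steps_append long_steps_replicate)

lemma nth_long_first: "j < a + b \<Longrightarrow> long_first b a ! j = (j < b)"
  by (simp add: long_first_def nth_append)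

lemma walk_offset_long_first: "walk_offset m (long_first b a) (a + b) = a + b + m * b"
  by (simp add: walk_offset_def long_steps_long_first)

text \<open>After the long steps of long_first only short steps follow, so two of them leave a border
  column (0 or m - 1) only if the walk has meanwhile wrapped into the next row.\<close>

lemma border_columns_div_less:
  fixes m s a b i j :: nat
  assumes m: "m \<ge> 2" and a: "a \<le> m" and sab: "s + a + b \<le> 2 * m - 1"
    and am: "a = m \<Longrightarrow> s + b \<noteq> 0"
    and ij: "b \<le> i" "i < j" "j < a + b"
    and bi: "(s + i) mod m = 0 \<or> (s + i) mod m = m - 1"
    and bj: "(s + j) mod m = 0 \<or> (s + j) mod m = m - 1"
  shows "(s + i) div m < (s + j) div m"
proof -
  have "s + i < 2 * m" "s + j < 2 * m" using ij sab m by auto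
  note di = div_mod_below_double[OF this(1)] and dj = div_mod_below_double[OF this(2)]
  show ?thesis
    using bi
  proof
    assume r0: "(s + i) mod m = 0"
    show ?thesis
    proof (cases "s + i < m")
      case True
      then have s0: "s = 0" "i = 0" "b = 0" using r0 di ij by auto
      then have "j mod m = 0 \<or> j mod m = m - 1" "j < m" using bj ij a by auto
      then have "j = m - 1" using ij s0 by auto
      then have "a = m" using ij s0 a by linarith
      then show ?thesis using am s0 by simp
    next
      case False
      then have e: "s + i = m" using r0 di by simp
      then have "(s + j) mod m = j - i" using dj ij by auto
      moreover have "0 < j - i" "j - i \<le> m - 2" using e sab ij by linarith+
      ultimately show ?thesis using bj m by linarith
    qed
  next
    assume r1: "(s + i) mod m = m - 1"
    have "s + i = m - 1"
    proof (rule ccontr)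
      assume "s + i \<noteq> m - 1"
      then have "s + i \<ge> m" using r1 di by (auto split: if_splits)
      moreover have "s + i < 2 * m - 2" using sab ij by linarith
      ultimately show False using r1 di by auto
    qed
    then have "(s + i) div m = 0" "s + j \<ge> m" using di m ij by auto
    then show ?thesis using dj by simp
  qed
qed

lemma rainbow_walk_long_first:
  assumes m: "m \<ge> 2" and s: "x mod m = s" and a: "a \<le> m" and b: "b \<le> m - 1"
    and ab: "0 < a \<Longrightarrow> b \<le> m - 2" and sab: "s + a + b \<le> 2 * m - 1"
    and am: "a = m \<Longrightarrow> s + b \<noteq> 0"
  shows "rainbow (colour m) (walk m x (long_first b a))"
proof (rule rainbow_walkI[OF m s])
  let ?w = "long_first b a"
  fix i j assume ij: "i < j" "j < length ?w"
  then have j: "j < a + b" by (simp add: length_long_first)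
  have index: "row_index m s ?w k = (s + k) div m + min k b" for k
    unfolding row_index_def long_steps_long_first ..
  have coloured: "row_coloured m s ?w k \<longleftrightarrow> k < b \<or> (s + k) mod m = 0 \<or> (s + k) mod m = m - 1"
    if "k < a + b" for k
    unfolding row_coloured_def nth_long_first[OF that] ..
  show "row_index m s ?w i < row_index m s ?w j \<and> row_index m s ?w j < row_index m s ?w i + m"
    if ri: "row_coloured m s ?w i" and rj: "row_coloured m s ?w j"
  proof
    have "(s + j) div m < 2" using j sab m by (intro less_mult_imp_div_less) simp
    moreover have "min j b - min i b \<le> m - 2"
      using ij j b ab by (cases "a = 0") (auto simp: min_def)
    moreover have "min i b \<le> min j b" using ij by simp
    ultimately show "row_index m s ?w j < row_index m s ?w i + m"
      unfolding index using m by linarith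
    show "row_index m s ?w i < row_index m s ?w j"
    proof (cases "i < b")
      case True
      then show ?thesis unfolding index using ij div_le_mono[of "s + i" "s + j" m] by (simp add: min_def)
    next
      case False
      then have "(s + i) div m < (s + j) div m"
        using border_columns_div_less[OF m a sab am _ ij(1) j] ri rj coloured j ij by simp
      moreover have "min i b = b" "min j b = b" using False ij by auto
      ultimately show ?thesis unfolding index by simp
    qed
  qed
  show "(s + i) mod m \<noteq> (s + j) mod m"
    if "\<not> row_coloured m s ?w i" "\<not> row_coloured m s ?w j"
  proof (rule mod_add_neq_close)
    show "j < i + m" using that coloured[of i] ij j a by simp
  qed (rule ij(1))
qed

text \<open>Used when the long steps of long_first would run past the last column: starting in column
  m - 1 - t, the first t long steps end in the last column, where a short and then a long step
  cross the border before the remaining short and long steps.\<close>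

definition split_long :: "nat \<Rightarrow> nat \<Rightarrow> nat \<Rightarrow> bool list" where
  "split_long t a c = replicate t True @ [False, True] @ replicate (a - 1) False @ replicate c True"

lemma length_split_long: "1 \<le> a \<Longrightarrow> length (split_long t a c) = t + a + 1 + c"
  by (simp add: split_long_def)

lemma long_steps_split_long:
  assumes "1 \<le> a"
  shows "long_steps (split_long t a c) j =
    (if j \<le> t then j else if j \<le> t + 1 then t else if j \<le> t + a + 1 then t + 1
     else min (j - a) (t + 1 + c))"
proof -
  have border: "long_steps [False, True] k = (if k \<le> 1 then 0 else 1)" for k
    by (cases k; cases "k - 1") (simp_all add: long_steps_def)
  show ?thesis
    unfolding split_long_def long_steps_append long_steps_replicate border
    using assms by (auto simp: min_def)
qed

lemma nth_split_long:
  "1 \<le> a \<Longrightarrow> j < t + a + 1 + c \<Longrightarrow>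
     split_long t a c ! j = (j < t \<or> j = t + 1 \<or> t + a + 1 \<le> j)"
  by (auto simp: split_long_def nth_append nth_Cons split: nat.splits)

lemma walk_offset_split_long:
  "1 \<le> a \<Longrightarrow> walk_offset m (split_long t a c) (t + a + 1 + c) = t + a + 1 + c + m * (t + 1 + c)"
  by (auto simp: walk_offset_def long_steps_split_long)

lemma row_index_split_long:
  assumes m: "m \<ge> 2" and st: "s + t = m - 1" and a: "1 \<le> a" "a \<le> m"
    and tc: "t + 1 + c \<le> m - 2" and j: "j < t + a + 1 + c"
  shows "row_index m s (split_long t a c) j =
    (if j \<le> t then j else if j = t + 1 then t + 1 else if j \<le> t + a then t + 2
     else if j \<le> t + m then j - a + 1 else j - a + 2)"
proof -
  have steps: "long_steps (split_long t a c) j = (if j \<le> t then j else if j \<le> t + 1 then t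
      else if j \<le> t + a + 1 then t + 1 else j - a)"
    using long_steps_split_long[OF a(1), of t c j] j by (auto simp: min_def)
  consider "j \<le> t" | "t < j" "j \<le> t + m" | "t + m < j" by linarith
  then show ?thesis
  proof cases
    case 1
    then have "s + j < m" using st m by linarith
    then show ?thesis using 1 steps by (simp add: row_index_def)
  next
    case 2
    then have "(s + j) div m = 1" using div_mod_below_double[of "s + j" m] st m by auto
    then show ?thesis using 2 steps a by (auto simp: row_index_def)
  next
    case 3
    then have "(s + j) div m = 2" using div_mod_below_triple[of m "s + j"] st j tc a by auto
    then show ?thesis using 3 steps a by (auto simp: row_index_def)
  qed
qed

lemma row_coloured_split_long:
  assumes m: "m \<ge> 2" and st: "s + t = m - 1" and a: "1 \<le> a" "a \<le> m"
    and j: "j < t + a + 1 + c"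
  shows "row_coloured m s (split_long t a c) j \<longleftrightarrow> j \<le> t + 1 \<or> j = t + m \<or> t + a < j"
proof -
  have letter: "split_long t a c ! j = (j < t \<or> j = t + 1 \<or> t + a + 1 \<le> j)"
    using nth_split_long[OF a(1) j] .
  consider "j \<le> t" | "t < j" "j \<le> t + a" | "t + a < j" by linarith
  then show ?thesis
  proof cases
    case 1
    then have "(s + j) mod m = s + j" using st m by simp
    then show ?thesis using 1 letter st m by (auto simp: row_coloured_def)
  next
    case 2
    then have "(s + j) mod m = j - t - 1" using div_mod_below_double[of "s + j" m] st m a by auto
    then show ?thesis using 2 letter st m by (auto simp: row_coloured_def)
  next
    case 3
    then show ?thesis using letter by (simp add: row_coloured_def)
  qed
qed

lemma rainbow_walk_split_long:
  assumes m: "m \<ge> 2" and s: "x mod m = s" and st: "s + t = m - 1" and a: "1 \<le> a" "a \<le> m"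
    and tc: "t + 1 + c \<le> m - 2"
  shows "rainbow (colour m) (walk m x (split_long t a c))"
proof (rule rainbow_walkI[OF m s])
  let ?w = "split_long t a c"
  fix i j assume "i < j" "j < length ?w"
  then have ij: "i < j" "j < t + a + 1 + c" "i < t + a + 1 + c" using length_split_long[OF a(1)] by auto
  note index = row_index_split_long[OF m st a tc] and coloured = row_coloured_split_long[OF m st a]
  show "row_index m s ?w i < row_index m s ?w j \<and> row_index m s ?w j < row_index m s ?w i + m"
    if "row_coloured m s ?w i" "row_coloured m s ?w j"
    using that ij a tc m unfolding index[OF ij(3)] index[OF ij(2)] coloured[OF ij(3)] coloured[OF ij(2)]
    by auto
  show "(s + i) mod m \<noteq> (s + j) mod m"
    if "\<not> row_coloured m s ?w i" "\<not> row_coloured m s ?w j"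
  proof (rule mod_add_neq_close)
    show "j < i + m" using that ij a unfolding coloured[OF ij(3)] coloured[OF ij(2)] by linarith
  qed (rule ij(1))
qed

text \<open>For a start in column 0 and offset m, the m short steps would leave columns 0 and m - 1
  within one row and so repeat a row colour; the m long steps are used instead, and their offset
  m(m + 1) wraps past m^2 onto m.\<close>

lemma walk_offset_all_long: "j \<le> m \<Longrightarrow> walk_offset m (replicate m True) j = j * (m + 1)"
  by (simp add: walk_offset_def long_steps_replicate algebra_simps)

lemma distinct_walk_all_long:
  assumes m: "m \<ge> 2"
  shows "distinct (walk m x (replicate m True))"
  unfolding walk_def
proof (rule distinct_map_upt_nat)
  fix i j assume ij: "i < j" "j < Suc (length (replicate m True))"
  show "walk_vertex m x (replicate m True) i \<noteq> walk_vertex m x (replicate m True) j"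
  proof (cases "j - i < m")
    case True
    have "(j - i) * (m + 1) < (j - i + 1) * m" using True by (simp add: algebra_simps)
    also have "\<dots> \<le> m * m" using True by (intro mult_le_mono1) simp
    finally have "(j - i) * (m + 1) < m * m" .
    moreover have "j * (m + 1) = i * (m + 1) + (j - i) * (m + 1)"
      using ij by (metis add_mult_distrib le_add_diff_inverse less_imp_le)
    ultimately have "j * (m + 1) < i * (m + 1) + m * m" by linarith
    moreover have "i * (m + 1) < j * (m + 1)" using ij by (intro mult_strict_right_mono) simp_all
    ultimately have "(x + i * (m + 1)) mod (m * m) \<noteq> (x + j * (m + 1)) mod (m * m)"
      by (intro mod_add_neq_close)
    then show ?thesis unfolding walk_vertex_def using ij by (simp add: walk_offset_all_long)
  next
    case False
    then have "i = 0" "j = m" using ij by auto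
    moreover have "(x + 0) mod (m * m) \<noteq> (x + m) mod (m * m)"
      using m by (intro mod_add_neq_close) auto
    moreover have "x + walk_offset m (replicate m True) m = (x + m) + 1 * (m * m)"
      by (simp add: walk_offset_all_long algebra_simps)
    ultimately show ?thesis
      unfolding walk_vertex_def by (simp only: mod_mult_self1) (simp add: walk_offset_def long_steps_def)
  qed
qed

lemma rainbow_walk_all_long:
  assumes m: "m \<ge> 2" and s: "x mod m = 0"
  shows "rainbow (colour m) (walk m x (replicate m True))"
proof (rule rainbow_walkI[OF m s])
  fix i j assume ij: "i < j" "j < length (replicate m True)"
  then have "row_index m 0 (replicate m True) i = i" "row_index m 0 (replicate m True) j = j"
    by (simp_all add: row_index_def long_steps_replicate)
  then show "row_index m 0 (replicate m True) i < row_index m 0 (replicate m True) j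
      \<and> row_index m 0 (replicate m True) j < row_index m 0 (replicate m True) i + m"
    using ij by simp
  show "\<not> row_coloured m 0 (replicate m True) i \<Longrightarrow> (0 + i) mod m \<noteq> (0 + j) mod m"
    using ij by (simp add: row_coloured_def)
qed


lemma shortest_rainbow_walk:
  assumes m: "m \<ge> 2" and x: "x < m * m"
    and offset: "walk_offset m w (length w) mod (m * m) = d" and len: "length w = step_dist m d"
    and dist: "distinct (walk m x w)" and rb: "rainbow (colour m) (walk m x w)"
  shows "\<exists>p. dipath (sq_circulant_vertices m) (sq_circulant_arc m) p x ((x + d) mod (m * m))
           \<and> rainbow (colour m) p \<and> path_len p = step_dist m d"
proof -
  have "walk_vertex m x w (length w) = (x + d) mod (m * m)"
    unfolding walk_vertex_def offset[symmetric] by (simp add: mod_add_right_eq)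
  then show ?thesis
    using dipath_walk[OF m x dist] rb len by (auto simp: path_len_def length_walk)
qed

lemma rainbow_path_step_dist_wrapping:
  assumes m: "m \<ge> 2" and x: "x < m * m" and d: "d < m * m"
    and wrap: "d mod m < d div m" and not_special: "\<not> (x mod m = 0 \<and> d div m = 1)"
  shows "\<exists>p. dipath (sq_circulant_vertices m) (sq_circulant_arc m) p x ((x + d) mod (m * m))
           \<and> rainbow (colour m) p \<and> path_len p = step_dist m d"
proof -
  define s b a where "s = x mod m" and "b = d div m - 1" and "a = d mod m + m - b"
  have "d div m < m" "s < m" using m d unfolding s_def by (auto simp: div_less_iff_less_mult)
  then have q: "d div m = b + 1" and "d mod m \<le> b" "b \<le> m - 2" using wrap unfolding b_def by auto
  have ab: "a + b = step_dist m d" "1 \<le> a" "a \<le> m"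
    using m wrap \<open>d mod m \<le> b\<close> \<open>b \<le> m - 2\<close> unfolding a_def step_dist_def by auto
  have offset: "d = a + b + m * b"
    using div_mult_mod_eq[of d m] q \<open>d mod m \<le> b\<close> \<open>b \<le> m - 2\<close>
    unfolding a_def by (simp add: algebra_simps)
  note walk = shortest_rainbow_walk[OF m x]
  show ?thesis
  proof (cases "s + b \<le> m - 1")
    case True
    have "rainbow (colour m) (walk m x (long_first b a))"
      using True not_special wrap ab q \<open>b \<le> m - 2\<close> unfolding s_def a_def
      by (intro rainbow_walk_long_first[OF m]) auto
    then show ?thesis
      using offset d ab walk_offset_long_first[of m b a] distinct_walk[of m "long_first b a" x]
      by (intro walk) (auto simp: length_long_first)
  next
    case False
    define t c where "t = m - 1 - s" and "c = b - 1 - t"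
    have st: "s + t = m - 1" and tc: "t + 1 + c = b"
      using \<open>s < m\<close> False unfolding t_def c_def by auto
    have "rainbow (colour m) (walk m x (split_long t a c))"
      using tc ab \<open>b \<le> m - 2\<close> by (intro rainbow_walk_split_long[OF m s_def[symmetric] st]) auto
    then show ?thesis
      using offset d tc ab walk_offset_split_long[of a m t c] distinct_walk[of m "split_long t a c" x]
      by (intro walk) (auto simp: length_split_long algebra_simps)
  qed
qed

lemma rainbow_path_step_dist:
  assumes m: "m \<ge> 2" and x: "x < m * m" and d: "d < m * m"
  shows "\<exists>p. dipath (sq_circulant_vertices m) (sq_circulant_arc m) p x ((x + d) mod (m * m))
           \<and> rainbow (colour m) p \<and> path_len p = step_dist m d"
proof -
  define q r where "q = d div m" and "r = d mod m"
  have dqr: "d = r + m * q" unfolding q_def r_def by simp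
  have "r < m" "q < m" "x mod m < m"
    using m d unfolding q_def r_def by (auto simp: div_less_iff_less_mult)
  note walk = shortest_rainbow_walk[OF m x]
  consider "q \<le> r" | "x mod m = 0" "q = 1" "r < q" | "r < q" "\<not> (x mod m = 0 \<and> q = 1)" by linarith
  then show ?thesis
  proof cases
    case 1
    have "walk_offset m (long_first q (r - q)) (length (long_first q (r - q))) = d"
      using 1 walk_offset_long_first[of m q "r - q"] dqr by (simp add: length_long_first)
    moreover have "x mod m + (r - q) + q \<le> 2 * m - 1" using 1 \<open>r < m\<close> \<open>x mod m < m\<close> by linarith
    then have "rainbow (colour m) (walk m x (long_first q (r - q)))"
      using 1 \<open>r < m\<close> \<open>q < m\<close> by (intro rainbow_walk_long_first[OF m refl]) auto
    ultimately show ?thesis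
      using 1 d distinct_walk[of m "long_first q (r - q)" x]
      by (intro walk) (auto simp: step_dist_def q_def r_def length_long_first)
  next
    case 2
    then have "d = m" "step_dist m d = m" using dqr m unfolding step_dist_def by auto
    moreover have "walk_offset m (replicate m True) m mod (m * m) = m"
      using walk_offset_all_long[of m m] m by (simp add: algebra_simps)
    ultimately show ?thesis
      using 2 distinct_walk_all_long[OF m] rainbow_walk_all_long[OF m] by (intro walk) auto
  next
    case 3
    then show ?thesis using rainbow_path_step_dist_wrapping[OF m x d] unfolding q_def r_def by blast
  qed
qed

lemma digraph_dist_sq_circulant:
  assumes m: "m \<ge> 2" and x: "x < m * m" and d: "d < m * m"
  shows "digraph_dist (sq_circulant_vertices m) (sq_circulant_arc m) x ((x + d) mod (m * m))
           = step_dist m d"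
proof -
  obtain p where "dipath (sq_circulant_vertices m) (sq_circulant_arc m) p x ((x + d) mod (m * m))"
    and "path_len p = step_dist m d"
    using rainbow_path_step_dist[OF assms] by blast
  then show ?thesis using step_dist_le_path_len[OF m d] by (intro digraph_dist_eqI) auto
qed

lemma strongly_rainbow_connected_colour:
  assumes m: "m \<ge> 2"
  shows "strongly_rainbow_connected (sq_circulant_vertices m) (sq_circulant_arc m) (colour m)"
  unfolding strongly_rainbow_connected_def
proof (intro ballI impI)
  fix x y assume "x \<in> sq_circulant_vertices m" "y \<in> sq_circulant_vertices m"
  then have x: "x < m * m" and y: "y < m * m" by (auto simp: circulant_vertices_def)
  define d where "d = (y + m * m - x) mod (m * m)"
  have d: "d < m * m" using m unfolding d_def by (intro mod_less_divisor) simp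
  have "(x + d) mod (m * m) = (y + 1 * (m * m)) mod (m * m)"
    using x unfolding d_def by (simp add: mod_add_right_eq)
  then have y_eq: "y = (x + d) mod (m * m)" using y by simp
  show "\<exists>p. dipath (sq_circulant_vertices m) (sq_circulant_arc m) p x y \<and> rainbow (colour m) p
          \<and> path_len p = digraph_dist (sq_circulant_vertices m) (sq_circulant_arc m) x y"
    unfolding y_eq digraph_dist_sq_circulant[OF m x d] by (rule rainbow_path_step_dist[OF m x d])
qed

lemma sq_circulant_rainbow_colours_ge:
  assumes m: "m \<ge> 2"
    and "arc_colouring (sq_circulant_vertices m) (sq_circulant_arc m) c K"
    and "rainbow_connected (sq_circulant_vertices m) (sq_circulant_arc m) c"
  shows "2 * m - 2 \<le> K"
proof -
  obtain k where k: "m = k + 2" using m by (metis add.commute le_Suc_ex)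
  define y where "y = m * m - 2"
  have "y = (m - 2) + (m - 1) * m" unfolding y_def k by (simp add: algebra_simps)
  then have "y div m = m - 1" "y mod m = m - 2"
    using div_mult_self1[of m "m - 2" "m - 1"] mod_mult_self1[of "m - 2" "m - 1" m] m by simp_all
  then have "step_dist m y = 2 * m - 2" unfolding step_dist_def using m by (simp add: mult_2)
  moreover have "y < m * m" "(0 + y) mod (m * m) = y" "0 < m * m" "0 \<noteq> y"
    using m unfolding y_def k by (simp_all add: algebra_simps)
  ultimately have "digraph_dist (sq_circulant_vertices m) (sq_circulant_arc m) 0 y = 2 * m - 2"
    using digraph_dist_sq_circulant[OF m, of 0 y] by simp
  moreover have "digraph_dist (sq_circulant_vertices m) (sq_circulant_arc m) 0 y \<le> K"
    using assms(2,3) \<open>y < m * m\<close> \<open>0 < m * m\<close> \<open>0 \<noteq> y\<close>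
    by (intro rainbow_connected_dist_le) (auto simp: circulant_vertices_def)
  ultimately show ?thesis by simp
qed

theorem src_star_rc_star_sq_circulant:
  assumes "m \<ge> 2"
  shows "src_star (sq_circulant_vertices m) (sq_circulant_arc m) = 2 * m - 2
       \<and> rc_star (sq_circulant_vertices m) (sq_circulant_arc m) = 2 * m - 2"
  using arc_colouring_colour[OF assms] strongly_rainbow_connected_colour[OF assms]
    sq_circulant_rainbow_colours_ge[OF assms]
  by (rule src_star_rc_star_eqI)

theorem theorem10:
  fixes k :: nat
  assumes "k \<ge> 3"
  shows "src_star (circulant_vertices ((k - 1)^2)) (circulant_arc ((k - 1)^2) {1, k}) = 2 * k - 4
       \<and> rc_star (circulant_vertices ((k - 1)^2)) (circulant_arc ((k - 1)^2) {1, k}) = 2 * k - 4"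
proof -
  have m: "k - 1 \<ge> 2" using assms by simp
  have "(k - 1)^2 = (k - 1) * (k - 1)" "{1, k} = {1, (k - 1) + 1}" "2 * k - 4 = 2 * (k - 1) - 2"
    using assms by (simp_all add: power2_eq_square)
  then show ?thesis using src_star_rc_star_sq_circulant[OF m] by (simp only:)
qed

end
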